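(* Let $G$ be an unweighted graph (all edges have equal weight) that is not a multigraph and is $2$-connected, and let $s, d$ be a source-destination pair. Suppose a forwarding subgraph (FS) uses the shortest path $P(s,d)$ between $s$ and $d$ as the primary path and can avoid any single link failure along the primary path. Then the number of edges in the FS is at least $\left\lceil \dfrac{5|P(s,d)|}{2} \right\rceil$, where $|P(s,d)|$ is the number of edges of $P(s,d)$. Moreover, there exist graphs for which this bound is tight.
   Context: A forwarding subgraph (FS) is a directed acyclic subgraph of the network graph specifying the paths a packet may take from source $s$ to destination $d$. It contains a designated primary path from $s$ to $d$. "Avoiding any single link failure along the primary path" means that for every node $v_i$ on the primary path, the FS contains an alternate path from $v_i$ to $d$ that does not use $v_i$'s outgoing primary-path link. Throughout, the graph is assumed not to be a multigraph and to be $2$-connected. *)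

theory Defs
  imports Complex_Main
begin

definition simple_graph :: "'a set \<Rightarrow> 'a set set \<Rightarrow> bool" where
  "simple_graph V E \<longleftrightarrow> finite V \<and> (\<forall>e\<in>E. e \<subseteq> V \<and> card e = 2)"

text \<open>Undirected path (as a vertex list): nonempty, no repeated vertex, consecutive vertices adjacent.
  Its number of edges is length xs - 1.\<close>
definition upath :: "'a set set \<Rightarrow> 'a list \<Rightarrow> bool" where
  "upath E xs \<longleftrightarrow> xs \<noteq> [] \<and> distinct xs \<and> (\<forall>i < length xs - 1. {xs ! i, xs ! (i + 1)} \<in> E)"

definition graph_connected :: "'a set \<Rightarrow> 'a set set \<Rightarrow> bool" where
  "graph_connected V E \<longleftrightarrow> V \<noteq> {} \<and>
     (\<forall>u\<in>V. \<forall>v\<in>V. \<exists>xs. set xs \<subseteq> V \<and> upath E xs \<and> hd xs = u \<and> last xs = v)"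

definition two_connected :: "'a set \<Rightarrow> 'a set set \<Rightarrow> bool" where
  "two_connected V E \<longleftrightarrow> card V \<ge> 3 \<and> graph_connected V E \<and>
     (\<forall>x\<in>V. graph_connected (V - {x}) {e\<in>E. x \<notin> e})"

definition shortest_path :: "'a set set \<Rightarrow> 'a \<Rightarrow> 'a \<Rightarrow> 'a list \<Rightarrow> bool" where
  "shortest_path E s d P \<longleftrightarrow> upath E P \<and> hd P = s \<and> last P = d \<and>
     (\<forall>Q. upath E Q \<and> hd Q = s \<and> last Q = d \<longrightarrow> length P \<le> length Q)"

definition dpath :: "('a \<times> 'a) set \<Rightarrow> 'a list \<Rightarrow> bool" where
  "dpath F xs \<longleftrightarrow> xs \<noteq> [] \<and> distinct xs \<and> (\<forall>i < length xs - 1. (xs ! i, xs ! (i + 1)) \<in> F)"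

definition uses_arc :: "'a list \<Rightarrow> 'a \<times> 'a \<Rightarrow> bool" where
  "uses_arc xs a \<longleftrightarrow> (\<exists>i < length xs - 1. (xs ! i, xs ! (i + 1)) = a)"

definition forwarding_subgraph ::
  "'a set set \<Rightarrow> 'a \<Rightarrow> 'a \<Rightarrow> 'a list \<Rightarrow> ('a \<times> 'a) set \<Rightarrow> bool" where
  "forwarding_subgraph E s d P F \<longleftrightarrow>
     (\<forall>(u, v)\<in>F. {u, v} \<in> E) \<and> acyclic F \<and>
     P \<noteq> [] \<and> hd P = s \<and> last P = d \<and> dpath F P"

definition avoids_single_link_failures :: "('a \<times> 'a) set \<Rightarrow> 'a \<Rightarrow> 'a list \<Rightarrow> bool" where
  "avoids_single_link_failures F d P \<longleftrightarrow>
     (\<forall>i < length P - 1. \<exists>Q. dpath F Q \<and> hd Q = P ! i \<and> last Q = d \<and>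
        \<not> uses_arc Q (P ! i, P ! (i + 1)))"

definition FS_setting ::
  "'a set \<Rightarrow> 'a set set \<Rightarrow> 'a \<Rightarrow> 'a \<Rightarrow> 'a list \<Rightarrow> ('a \<times> 'a) set \<Rightarrow> bool" where
  "FS_setting V E s d P F \<longleftrightarrow>
     simple_graph V E \<and> two_connected V E \<and> s \<in> V \<and> d \<in> V \<and> s \<noteq> d \<and>
     shortest_path E s d P \<and> forwarding_subgraph E s d P F \<and>
     avoids_single_link_failures F d P"

end

theory Submission
  imports Defs
begin

text \<open>Every vertex \<open>v\<^sub>i\<close> (\<open>i < k\<close>) of the primary path needs two outgoing arcs: the primary
  arc and the first arc of its backup path. The latter leaves the primary path, since an arc back
  along it would close a cycle and an arc jumping ahead would shortcut the shortest path; this gives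
  \<open>2k\<close> arcs. Each backup path then runs through off-path vertices, each with an outgoing arc of
  its own. Charging \<open>i\<close> to the first off-path vertex of its backup path, or to the second one
  when \<open>i\<close> shares the first one with \<open>i - 2\<close>, every off-path vertex is charged by at most two
  indices, again because no detour may be shorter than the stretch of primary path it bypasses.
  So there are \<open>k / 2\<close> further arcs and \<open>|F| \<ge> \<lceil>5k/2\<rceil>\<close>. Equality holds on a layered graph in
  which the primary vertices at positions \<open>2j\<close> and \<open>2j + 1\<close> share a single bypass vertex.\<close>

lemma upath_iff_successively:
  "upath E xs \<longleftrightarrow> xs \<noteq> [] \<and> distinct xs \<and> successively (\<lambda>a b. {a, b} \<in> E) xs"
  by (auto simp: upath_def successively_conv_nth)

lemma dpath_iff_successively:
  "dpath F xs \<longleftrightarrow> xs \<noteq> [] \<and> distinct xs \<and> successively (\<lambda>a b. (a, b) \<in> F) xs"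
  by (auto simp: dpath_def successively_conv_nth)

lemma upath_rev: "upath E (rev xs) \<longleftrightarrow> upath E xs"
  by (simp add: upath_iff_successively insert_commute)

lemma upath_splice:
  assumes "upath E (xs @ u # zs @ v # us)" "upath E (u # ys @ [v])"
    and "set ys \<inter> set (xs @ u # zs @ v # us) = {}"
  shows "upath E (xs @ u # ys @ v # us)"
proof -
  let ?adj = "\<lambda>a b. {a, b} \<in> E"
  have "successively ?adj ((xs @ [u]) @ zs @ v # us)" "distinct (xs @ u # zs @ v # us)"
    using assms(1) by (simp_all add: upath_iff_successively)
  then have P: "successively ?adj (xs @ [u])" "successively ?adj (v # us)"
    "distinct (xs @ u # zs @ v # us)"
    by (auto simp only: successively_append_iff append_Cons[symmetric])
  have D: "successively ?adj ((u # ys) @ [v])" "distinct (u # ys @ [v])"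
    using assms(2) by (simp_all add: upath_iff_successively)
  have "successively ?adj ((u # ys) @ (v # us))"
    using D(1) P(2) by (simp only: successively_append_iff) simp
  then have "successively ?adj (xs @ (u # ys @ v # us))"
    using P(1) by (simp add: successively_append_iff)
  moreover have "distinct (xs @ u # ys @ v # us)"
    using P(3) D(2) assms(3) by auto
  ultimately show ?thesis by (simp add: upath_iff_successively)
qed

lemma dpath_arc: "dpath F xs \<Longrightarrow> Suc j < length xs \<Longrightarrow> (xs ! j, xs ! Suc j) \<in> F"
  by (simp add: dpath_def)

lemma dpath_rtrancl:
  assumes "dpath F xs" "i \<le> j" "j < length xs"
  shows "(xs ! i, xs ! j) \<in> F\<^sup>*"
  using assms(2,3)
proof (induction j)
  case (Suc j)
  then show ?case
    using dpath_arc[OF assms(1), of j] by (cases "i = Suc j") (auto intro: rtrancl_into_rtrancl)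
qed simp

lemma not_uses_arc_Cons:
  assumes "distinct (u # w # xs)" "w \<noteq> v"
  shows "\<not> uses_arc (u # w # xs) (u, v)"
proof
  assume "uses_arc (u # w # xs) (u, v)"
  then obtain i where i: "i < Suc (length xs)" "(u # w # xs) ! i = u" "(u # w # xs) ! Suc i = v"
    by (auto simp: uses_arc_def)
  then have "i = 0"
    using assms(1) nth_eq_iff_index_eq[OF assms(1), of i 0] by simp
  then show False using i(3) assms(2) by simp
qed

lemma upath_if_rtrancl:
  assumes E: "\<forall>e\<in>E. e \<subseteq> W" and u: "u \<in> W" and r: "(u, v) \<in> {(a, b). {a, b} \<in> E}\<^sup>*"
  shows "\<exists>xs. set xs \<subseteq> W \<and> upath E xs \<and> hd xs = u \<and> last xs = v"
  using r
proof (induction rule: rtrancl_induct)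
  case base
  then show ?case using u by (intro exI[of _ "[u]"]) (simp add: upath_def)
next
  case (step y z)
  then obtain xs where xs: "set xs \<subseteq> W" "upath E xs" "hd xs = u" "last xs = y" by blast
  have yz: "{y, z} \<in> E" using step by simp
  show ?case
  proof (cases "z \<in> set xs")
    case True
    then obtain i where i: "i < length xs" "xs ! i = z" by (auto simp: in_set_conv_nth)
    let ?ys = "take (Suc i) xs"
    have "upath E (?ys @ drop (Suc i) xs)" using xs(2) by simp
    then have "upath E ?ys"
      using i by (auto simp: upath_iff_successively successively_append_iff simp del: append_take_drop_id)
    moreover have "hd ?ys = u" using xs(3) by (simp add: hd_take)
    moreover have "last ?ys = z" using i by (simp add: take_Suc_conv_app_nth)
    moreover have "set ?ys \<subseteq> W" using xs(1) set_take_subset[of "Suc i" xs] by blast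
    ultimately show ?thesis by blast
  next
    case False
    have "upath E (xs @ [z])"
      using xs(2,4) False yz by (auto simp: upath_iff_successively successively_append_iff)
    moreover have "set (xs @ [z]) \<subseteq> W" using xs(1) yz E by auto
    ultimately show ?thesis using xs(2,3) by (intro exI[of _ "xs @ [z]"]) (auto simp: upath_def)
  qed
qed

lemma graph_connected_if_reachable:
  assumes E: "\<forall>e\<in>E. e \<subseteq> W" and c: "c \<in> W"
    and reach: "\<And>y. y \<in> W \<Longrightarrow> (c, y) \<in> {(a, b). {a, b} \<in> E}\<^sup>*"
  shows "graph_connected W E"
  unfolding graph_connected_def
proof (intro conjI ballI)
  let ?R = "{(a, b). {a, b} \<in> E}"
  show "W \<noteq> {}" using c by auto
  fix u v assume uv: "u \<in> W" "v \<in> W"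
  have "?R\<inverse> = ?R" by (auto simp: insert_commute)
  then have "(u, c) \<in> ?R\<^sup>*" using reach[OF uv(1)] rtrancl_converseI[of c u ?R] by simp
  then have "(u, v) \<in> ?R\<^sup>*" using reach[OF uv(2)] by simp
  then show "\<exists>xs. set xs \<subseteq> W \<and> upath E xs \<and> hd xs = u \<and> last xs = v"
    by (rule upath_if_rtrancl[OF E uv(1)])
qed

lemma upath_last_le:
  fixes f :: "'a \<Rightarrow> nat"
  assumes Q: "upath E Q" and f: "\<And>x y. {x, y} \<in> E \<Longrightarrow> f y \<le> f x + 1"
  shows "f (last Q) \<le> f (hd Q) + (length Q - 1)"
proof -
  have "f (Q ! i) \<le> f (Q ! 0) + i" if "i < length Q" for i
    using that
  proof (induction i)
    case (Suc i)
    then have "{Q ! i, Q ! Suc i} \<in> E" using Q by (simp add: upath_def)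
    then show ?case using f Suc by fastforce
  qed simp
  moreover have "Q \<noteq> []" using Q by (simp add: upath_def)
  ultimately show ?thesis by (simp add: hd_conv_nth last_conv_nth)
qed

section \<open>Detours around a shortest path\<close>

lemma shortest_path_detour_bound:
  assumes sp: "shortest_path E s d P" and ab: "a < b" "b < length P"
    and off: "set ys \<inter> set P = {}" and detour: "upath E (P ! a # ys @ [P ! b])"
  shows "b \<le> a + length ys + 1"
proof -
  define xs where "xs = take a P"
  define zs where "zs = take (b - Suc a) (drop (Suc a) P)"
  define us where "us = drop (Suc b) P"
  have "drop (Suc a) P = zs @ drop (b - Suc a) (drop (Suc a) P)"
    unfolding zs_def by (rule append_take_drop_id[symmetric])
  also have "drop (b - Suc a) (drop (Suc a) P) = P ! b # us"
    using ab by (simp add: us_def Cons_nth_drop_Suc)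
  finally have split: "P = xs @ P ! a # zs @ P ! b # us"
    using ab id_take_nth_drop[of a P] by (simp add: xs_def)
  have P: "upath E P" "hd P = s" "last P = d"
    using sp by (auto simp: shortest_path_def)
  define Q where "Q = xs @ P ! a # ys @ P ! b # us"
  have "upath E Q"
    unfolding Q_def using upath_splice[of E xs "P ! a" zs "P ! b" us ys] P(1) split detour off
    by simp
  moreover have "hd Q = s" "last Q = d"
    using P(2,3) arg_cong[OF split, of hd] arg_cong[OF split, of last]
    by (simp_all add: Q_def hd_append split: if_splits)
  ultimately have "length P \<le> length Q"
    using sp by (auto simp: shortest_path_def)
  moreover have "length xs = a" "length zs = b - Suc a"
    using ab by (simp_all add: xs_def zs_def)
  moreover have "length P = length xs + length zs + length us + 2"
    using arg_cong[OF split, of length] by simp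
  ultimately show ?thesis
    using ab by (simp add: Q_def)
qed

lemma shortest_path_detour_bound_sym:
  assumes sp: "shortest_path E s d P" and ab: "a < length P" "b < length P"
    and off: "set ys \<inter> set P = {}" and detour: "upath E (P ! a # ys @ [P ! b])"
  shows "b \<le> a + length ys + 1 \<and> a \<le> b + length ys + 1"
proof -
  have "a \<noteq> b" using detour by (auto simp: upath_def)
  moreover have "upath E (P ! b # rev ys @ [P ! a])"
    using detour upath_rev[of E "P ! a # ys @ [P ! b]"] by simp
  ultimately show ?thesis
    using shortest_path_detour_bound[OF sp _ _ off] shortest_path_detour_bound[OF sp, of b a "rev ys"]
      ab off detour by (cases "a < b") auto
qed

lemma card_le_two_if_odd_differences:
  fixes A :: "nat set"
  assumes "\<And>a b. a \<in> A \<Longrightarrow> b \<in> A \<Longrightarrow> a < b \<Longrightarrow> odd (b - a)"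
  shows "card A \<le> 2"
proof -
  have "inj_on (\<lambda>n. n mod 2) A"
  proof (rule inj_onI)
    fix a b assume "a \<in> A" "b \<in> A" "a mod 2 = b mod 2"
    then show "a = b"
      using assms[of a b] assms[of b a] by (cases a b rule: linorder_cases) presburger+
  qed
  moreover have "(\<lambda>n. n mod 2) ` A \<subseteq> {0, 1}" by auto
  ultimately show ?thesis
    using card_inj_on_le[of _ A "{0, 1 :: nat}"] by (simp add: numeral_2_eq_2)
qed

lemma card_le_mult_if_fibres_le:
  assumes "finite B" "f ` A \<subseteq> B" "\<And>y. y \<in> B \<Longrightarrow> card {x \<in> A. f x = y} \<le> n"
  shows "card A \<le> n * card B"
proof -
  have "A = (\<Union>y\<in>B. {x \<in> A. f x = y})" using assms(2) by auto
  then have "card A \<le> (\<Sum>y\<in>B. card {x \<in> A. f x = y})"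
    using card_UN_le[OF assms(1)] by metis
  also have "\<dots> \<le> (\<Sum>y\<in>B. n)" by (rule sum_mono) (rule assms(3))
  finally show ?thesis by (simp add: mult.commute)
qed

lemma ceiling_five_halves: "\<lceil>5 * real k / 2\<rceil> = int (2 * k + (k + 1) div 2)"
proof (cases "even k")
  case True
  then obtain m where m: "k = 2 * m" by blast
  have "\<lceil>5 * real k / 2\<rceil> = int (5 * m)"
    by (rule ceiling_unique) (simp_all add: m)
  then show ?thesis by (simp add: m)
next
  case False
  then obtain m where m: "k = 2 * m + 1" using oddE by blast
  have "\<lceil>5 * real k / 2\<rceil> = int (5 * m + 3)"
    by (rule ceiling_unique) (simp_all add: m)
  then show ?thesis by (simp add: m)
qed

section \<open>The lower bound\<close>

locale forwarding_instance =
  fixes V :: "'a set" and E :: "'a set set" and s d :: 'a and P :: "'a list" and F :: "('a \<times> 'a) set"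
  assumes setting: "FS_setting V E s d P F"
begin

definition k :: nat where "k = length P - 1"

lemma shortest: "shortest_path E s d P"
  and acyclic_F: "acyclic F"
  and primary_dpath: "dpath F P"
  and edge_of_arc: "(u, v) \<in> F \<Longrightarrow> {u, v} \<in> E"
  using setting by (auto simp: FS_setting_def forwarding_subgraph_def)

lemma length_P: "length P = Suc k" and last_vertex: "P ! k = d"
proof -
  have P: "P \<noteq> []" "last P = d"
    using setting by (auto simp: FS_setting_def shortest_path_def upath_def)
  then show "length P = Suc k" "P ! k = d" by (simp_all add: k_def last_conv_nth)
qed

lemma distinct_P: "distinct P"
  using primary_dpath by (simp add: dpath_def)

lemma path_vertex_eq_iff: "i \<le> k \<Longrightarrow> j \<le> k \<Longrightarrow> P ! i = P ! j \<longleftrightarrow> i = j"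
  using distinct_P length_P by (simp add: nth_eq_iff_index_eq)

lemma in_path_iff: "x \<in> set P \<longleftrightarrow> (\<exists>j\<le>k. P ! j = x)"
  using length_P by (auto simp: in_set_conv_nth less_Suc_eq_le)

lemma path_vertex_in_path: "j \<le> k \<Longrightarrow> P ! j \<in> set P"
  using length_P by simp

lemma arc_endpoints: "(u, v) \<in> F \<Longrightarrow> u \<noteq> v \<and> u \<in> V \<and> v \<in> V"
proof -
  assume "(u, v) \<in> F"
  then have "{u, v} \<in> E" by (rule edge_of_arc)
  then have "card {u, v} = 2" "{u, v} \<subseteq> V"
    using setting by (auto simp: FS_setting_def simple_graph_def)
  then show ?thesis by (cases "u = v") auto
qed

lemma finite_F: "finite F"
proof (rule finite_subset)
  show "F \<subseteq> V \<times> V" using arc_endpoints by auto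
  show "finite (V \<times> V)" using setting by (simp add: FS_setting_def simple_graph_def)
qed

lemma primary_arc: "i < k \<Longrightarrow> (P ! i, P ! Suc i) \<in> F"
  using primary_dpath length_P by (simp add: dpath_def)

lemma arc_not_backwards: "(u, v) \<in> F\<^sup>+ \<Longrightarrow> (v, u) \<in> F\<^sup>* \<Longrightarrow> False"
  using acyclic_F by (meson acyclic_def trancl_rtrancl_trancl)

lemma path_reach: "i \<le> j \<Longrightarrow> j \<le> k \<Longrightarrow> (P ! i, P ! j) \<in> F\<^sup>*"
  using dpath_rtrancl[OF primary_dpath] length_P by simp

lemma edge_of_arc_rev: "(u, v) \<in> F \<Longrightarrow> {v, u} \<in> E"
  using edge_of_arc by (simp add: insert_commute)

lemma detour_bound:
  assumes "a \<le> k" "b \<le> k" "a \<noteq> b" "set ys \<inter> set P = {}" "distinct ys"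
    and "successively (\<lambda>u v. {u, v} \<in> E) (P ! a # ys @ [P ! b])"
  shows "b \<le> a + length ys + 1 \<and> a \<le> b + length ys + 1"
proof -
  have "P ! a \<noteq> P ! b" "P ! a \<notin> set ys" "P ! b \<notin> set ys"
    using assms(1-4) path_vertex_eq_iff path_vertex_in_path by blast+
  then have "upath E (P ! a # ys @ [P ! b])"
    using assms(5,6) by (simp add: upath_iff_successively)
  then show ?thesis
    using shortest_path_detour_bound_sym[OF shortest] length_P assms(1,2,4) by simp
qed

lemma arc_between_path_vertices:
  assumes "(P ! i, P ! j) \<in> F" "i \<le> k" "j \<le> k"
  shows "j = Suc i"
proof -
  have "i \<noteq> j" using assms(1) arc_endpoints by auto
  then have "j \<le> i + 1"
    using detour_bound[of i j "[]"] assms edge_of_arc by simp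
  moreover have "\<not> j \<le> i"
    using assms path_reach arc_not_backwards by blast
  ultimately show ?thesis by linarith
qed

definition alt :: "nat \<Rightarrow> 'a list" where
  "alt i = (SOME Q. dpath F Q \<and> hd Q = P ! i \<and> last Q = d \<and> \<not> uses_arc Q (P ! i, P ! (i + 1)))"

definition first_hop :: "nat \<Rightarrow> 'a" where "first_hop i = alt i ! 1"
definition second_hop :: "nat \<Rightarrow> 'a" where "second_hop i = alt i ! 2"

definition off_path_sources :: "'a set" where
  "off_path_sources = {u. u \<notin> set P \<and> (\<exists>v. (u, v) \<in> F)}"

lemma alt:
  assumes "i < k"
  shows "dpath F (alt i)" "alt i ! 0 = P ! i" "last (alt i) = d"
    "\<not> uses_arc (alt i) (P ! i, P ! Suc i)"
proof -
  have "\<exists>Q. dpath F Q \<and> hd Q = P ! i \<and> last Q = d \<and> \<not> uses_arc Q (P ! i, P ! (i + 1))"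
    using setting assms length_P by (auto simp: FS_setting_def avoids_single_link_failures_def)
  then have "dpath F (alt i) \<and> hd (alt i) = P ! i \<and> last (alt i) = d
      \<and> \<not> uses_arc (alt i) (P ! i, P ! (i + 1))"
    unfolding alt_def by (rule someI_ex)
  then show "dpath F (alt i)" "alt i ! 0 = P ! i" "last (alt i) = d"
    "\<not> uses_arc (alt i) (P ! i, P ! Suc i)"
    by (auto simp: dpath_def hd_conv_nth)
qed

lemma alt_step_off_path:
  assumes "i < k" "j < length (alt i)" "alt i ! j \<notin> set P"
  shows "Suc j < length (alt i)" "(alt i ! j, alt i ! Suc j) \<in> F"
proof -
  have "alt i ! j \<noteq> last (alt i)"
    using assms alt(3) last_vertex path_vertex_in_path[of k] by auto
  then show "Suc j < length (alt i)"
    using assms(2) by (metis Suc_lessI diff_Suc_1 last_conv_nth list.size(3) not_less_zero)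
  then show "(alt i ! j, alt i ! Suc j) \<in> F"
    using dpath_arc[OF alt(1)[OF assms(1)]] by simp
qed

lemma alt_length: "i < k \<Longrightarrow> 1 < length (alt i)"
proof -
  assume i: "i < k"
  then have "alt i ! 0 \<noteq> last (alt i)"
    using alt(2,3) last_vertex path_vertex_eq_iff[of i k] by auto
  then show "1 < length (alt i)"
    using alt(1)[OF i] by (cases "alt i") (auto simp: dpath_def)
qed

lemma first_hop:
  assumes "i < k"
  shows "(P ! i, first_hop i) \<in> F" "first_hop i \<notin> set P"
proof -
  note len = alt_length[OF assms]
  show arc: "(P ! i, first_hop i) \<in> F"
    using dpath_arc[OF alt(1)[OF assms], of 0] alt(2)[OF assms] len by (simp add: first_hop_def)
  have "first_hop i \<noteq> P ! Suc i"
    using alt(4)[OF assms] len alt(2)[OF assms] by (auto simp: uses_arc_def first_hop_def)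
  moreover have "j = Suc i" if "j \<le> k" "P ! j = first_hop i" for j
    using arc arc_between_path_vertices[of i j] assms that by simp
  ultimately show "first_hop i \<notin> set P"
    by (auto simp: in_path_iff)
qed


lemma first_hop_source:
  assumes "i < k"
  shows "(first_hop i, second_hop i) \<in> F" "2 < length (alt i)" "first_hop i \<in> off_path_sources"
  using alt_step_off_path[of i 1] assms alt_length first_hop(2)
  by (auto simp: first_hop_def second_hop_def off_path_sources_def numeral_2_eq_2)

lemma first_hop_repeat_bound:
  assumes "i < j" "j < k" "first_hop i = first_hop j"
  shows "j \<le> i + 2"
  using detour_bound[of i j "[first_hop i]"] assms first_hop[of i] first_hop(1)[of j]
    edge_of_arc edge_of_arc_rev by simp

definition hop_repeated :: "nat \<Rightarrow> bool" where
  "hop_repeated i \<longleftrightarrow> 2 \<le> i \<and> first_hop (i - 2) = first_hop i"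

lemma second_hop:
  assumes i: "i < k" and rep: "hop_repeated i"
  shows "second_hop i \<notin> set P" "second_hop i \<in> off_path_sources"
proof -
  have arc: "(first_hop i, second_hop i) \<in> F" by (rule first_hop_source(1)[OF i])
  have rep': "2 \<le> i" "first_hop (i - 2) = first_hop i" using rep by (auto simp: hop_repeated_def)
  show off: "second_hop i \<notin> set P"
  proof
    assume "second_hop i \<in> set P"
    then obtain j where j: "j \<le> k" "P ! j = second_hop i" by (auto simp: in_path_iff)
    show False
    proof (cases "j \<le> i")
      case True
      have "(P ! i, P ! j) \<in> F\<^sup>+" using first_hop(1)[OF i] arc j by auto
      then show False using path_reach[of j i] True i arc_not_backwards by simp
    next
      case False
      have "j \<le> i - 2 + 2"
        using detour_bound[of "i - 2" j "[first_hop i]"] first_hop(1)[of "i - 2"] first_hop(2)[OF i]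
          rep' i arc j False edge_of_arc by simp
      then show False using False rep' by simp
    qed
  qed
  show "second_hop i \<in> off_path_sources"
    using alt_step_off_path[of i 2] i off first_hop_source(2)[OF i]
    by (auto simp: second_hop_def off_path_sources_def)
qed

lemma first_hop_eq_second_hop:
  assumes i: "i < k" "hop_repeated i" and j: "j < k" "first_hop j = second_hop i"
  shows "j + 3 = i \<or> j + 1 = i \<or> j = i + 1"
proof -
  let ?w = "first_hop i" and ?y = "second_hop i"
  have rep: "2 \<le> i" "first_hop (i - 2) = ?w" using i by (auto simp: hop_repeated_def)
  have arcs: "(P ! i, ?w) \<in> F" "(P ! (i - 2), ?w) \<in> F" "(?w, ?y) \<in> F" "(P ! j, ?y) \<in> F"
    using first_hop(1)[of i] first_hop(1)[of "i - 2"] first_hop_source(1)[of i] first_hop(1)[of j]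
      i j rep by auto
  have off: "?w \<notin> set P" "?y \<notin> set P" "?w \<noteq> ?y"
    using first_hop(2)[OF i(1)] second_hop(1)[OF i] arc_endpoints arcs(3) by auto
  have ne: "j \<noteq> i" "j \<noteq> i - 2" using off(3) j(2) rep(2) by auto
  have "j \<le> i - 2 + 3"
    using detour_bound[of "i - 2" j "[?w, ?y]"] arcs off ne i j diff_le_self[of i 2] edge_of_arc edge_of_arc_rev by simp
  moreover have "i \<le> j + 3"
    using detour_bound[of i j "[?w, ?y]"] arcs off ne i j edge_of_arc edge_of_arc_rev by simp
  ultimately show ?thesis using ne rep(1) by linarith
qed

lemma second_hop_eq:
  assumes ij: "i < j" "j < k" and rep: "hop_repeated i" "hop_repeated j"
    and eq: "second_hop i = second_hop j"
  shows "j = i + 1"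
proof -
  let ?y = "second_hop i"
  have i: "i < k" using ij by simp
  have rep': "2 \<le> i" "first_hop (i - 2) = first_hop i" "first_hop (j - 2) = first_hop j"
    using rep by (auto simp: hop_repeated_def)
  have w_ne: "first_hop i \<noteq> first_hop j"
  proof
    assume "first_hop i = first_hop j"
    then have "j \<le> i - 2 + 2" using first_hop_repeat_bound[of "i - 2" j] ij rep'(2) by simp
    then show False using ij rep'(1) by simp
  qed
  have arcs: "(P ! (i - 2), first_hop i) \<in> F" "(first_hop i, ?y) \<in> F" "(first_hop j, ?y) \<in> F"
    "(P ! j, first_hop j) \<in> F"
    using first_hop(1)[of "i - 2"] first_hop_source(1)[OF i] first_hop_source(1)[OF ij(2)]
      first_hop(1)[OF ij(2)] eq rep' i by auto
  have off: "first_hop i \<notin> set P" "first_hop j \<notin> set P" "?y \<notin> set P"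
    "first_hop i \<noteq> ?y" "first_hop j \<noteq> ?y"
    using first_hop(2)[OF i] first_hop(2)[OF ij(2)] second_hop(1)[OF i rep(1)]
      arc_endpoints arcs(2,3) by auto
  have "i - 2 \<noteq> j" "i - 2 \<le> k" using ij by auto
  then have "j \<le> i - 2 + 4"
    using detour_bound[of "i - 2" j "[first_hop i, ?y, first_hop j]"] arcs off w_ne ij
      edge_of_arc edge_of_arc_rev by simp
  moreover have "j \<noteq> i + 2" using w_ne rep'(3) by auto
  ultimately show ?thesis using ij rep'(1) by linarith
qed


text \<open>First hops may coincide for \<open>i\<close>, \<open>i + 1\<close> and \<open>i + 2\<close>; charging the second hop whenever
  \<open>i\<close> repeats the first hop of \<open>i - 2\<close> leaves only the gaps 1 and 3 between equally charged
  indices.\<close>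

definition charge :: "nat \<Rightarrow> 'a" where
  "charge i = (if hop_repeated i then second_hop i else first_hop i)"

lemma charge_eq_gap:
  assumes pq: "p < q" "q < k" and eq: "charge p = charge q"
  shows "q = p + 1 \<or> q = p + 3"
proof (cases "hop_repeated p"; cases "hop_repeated q")
  assume "\<not> hop_repeated p" "\<not> hop_repeated q"
  then have "first_hop p = first_hop q" using eq by (simp add: charge_def)
  moreover from this have "q \<le> p + 2" using first_hop_repeat_bound pq by simp
  ultimately show ?thesis
    using \<open>\<not> hop_repeated q\<close> pq by (cases "q = p + 2") (auto simp: hop_repeated_def)
next
  assume "hop_repeated p" "hop_repeated q"
  then show ?thesis using second_hop_eq pq eq by (simp add: charge_def)
next
  assume "hop_repeated p" "\<not> hop_repeated q"
  then show ?thesis using first_hop_eq_second_hop[of p q] pq eq by (auto simp: charge_def)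
next
  assume "\<not> hop_repeated p" "hop_repeated q"
  then show ?thesis using first_hop_eq_second_hop[of q p] pq eq by (auto simp: charge_def)
qed

lemma finite_off_path_sources: "finite off_path_sources"
proof (rule finite_subset)
  show "off_path_sources \<subseteq> fst ` F" unfolding off_path_sources_def by force
qed (simp add: finite_F)

lemma length_le_twice_off_path_sources: "k \<le> 2 * card off_path_sources"
proof -
  have "card {..<k} \<le> 2 * card off_path_sources"
  proof (rule card_le_mult_if_fibres_le[OF finite_off_path_sources])
    show "charge ` {..<k} \<subseteq> off_path_sources"
      using first_hop_source(3) second_hop(2) by (auto simp: charge_def)
    fix y
    show "card {i \<in> {..<k}. charge i = y} \<le> 2"
    proof (rule card_le_two_if_odd_differences)
      fix p q assume "p \<in> {i \<in> {..<k}. charge i = y}" "q \<in> {i \<in> {..<k}. charge i = y}" "p < q"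
      then have "q = p + 1 \<or> q = p + 3" using charge_eq_gap[of p q] by simp
      then show "odd (q - p)" by auto
    qed
  qed
  then show ?thesis by simp
qed

lemma card_F_ge: "2 * k + card off_path_sources \<le> card F"
proof -
  define primary where "primary = (\<lambda>i. (P ! i, P ! Suc i)) ` {..<k}"
  define first where "first = (\<lambda>i. (P ! i, first_hop i)) ` {..<k}"
  define off where "off = {a \<in> F. fst a \<notin> set P}"
  have sub: "primary \<union> first \<union> off \<subseteq> F"
    using primary_arc first_hop(1) by (auto simp: primary_def first_def off_def)
  then have fin: "finite primary" "finite first" "finite off"
    using finite_F by (auto intro: finite_subset)
  have "card primary = k" "card first = k"
    unfolding primary_def first_def using path_vertex_eq_iff by (auto simp: card_image inj_on_def)
  moreover have "card off_path_sources \<le> card off"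
  proof -
    have "off_path_sources \<subseteq> fst ` off" unfolding off_path_sources_def off_def by force
    then have "card off_path_sources \<le> card (fst ` off)"
      using fin(3) by (intro card_mono) auto
    also have "\<dots> \<le> card off" using fin(3) by (rule card_image_le)
    finally show ?thesis .
  qed
  moreover have "primary \<inter> first = {}"
  proof -
    have "P ! Suc i \<noteq> first_hop j" if "i < k" "j < k" for i j
      using first_hop(2)[OF that(2)] path_vertex_in_path[of "Suc i"] that(1) by auto
    then show ?thesis by (auto simp: primary_def first_def)
  qed
  moreover have "(primary \<union> first) \<inter> off = {}"
    using path_vertex_in_path by (auto simp: primary_def first_def off_def)
  moreover have "card (primary \<union> first \<union> off) \<le> card F"
    using sub by (rule card_mono[OF finite_F])
  ultimately show ?thesis using fin by (simp add: card_Un_disjoint)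
qed

lemma card_F_lower_bound: "2 * k + (k + 1) div 2 \<le> card F"
  using card_F_ge length_le_twice_off_path_sources by linarith

end

section \<open>A family attaining the bound\<close>

text \<open>Vertex \<open>n\<close> encodes the pair \<open>(n div 3, n mod 3)\<close>: \<open>prim a\<close> is the \<open>a\<close>-th vertex of the
  primary path, \<open>twin a\<close> a second vertex on level \<open>a\<close> (it makes the graph 2-connected), and
  \<open>bypass j\<close>, on level \<open>2j + 1\<close>, is the detour shared by \<open>prim (2j)\<close> and \<open>prim (2j + 1)\<close>.\<close>

definition prim :: "nat \<Rightarrow> nat" where "prim a = 3 * a"
definition twin :: "nat \<Rightarrow> nat" where "twin a = 3 * a + 1"
definition bypass :: "nat \<Rightarrow> nat" where "bypass j = 3 * j + 2"

definition level :: "nat \<Rightarrow> nat" where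
  "level n = (if n mod 3 = 2 then 2 * (n div 3) + 1 else n div 3)"

lemma vertex_div_mod [simp]:
  "prim a div 3 = a" "twin a div 3 = a" "bypass a div 3 = a"
  "prim a mod 3 = 0" "twin a mod 3 = 1" "bypass a mod 3 = 2"
  by (simp_all add: prim_def twin_def bypass_def mod_Suc)

lemma level_simps [simp]: "level (prim a) = a" "level (twin a) = a" "level (bypass j) = 2 * j + 1"
  by (simp_all add: level_def)

lemma vertex_inject [simp]:
  "prim a = prim b \<longleftrightarrow> a = b" "twin a = twin b \<longleftrightarrow> a = b" "bypass a = bypass b \<longleftrightarrow> a = b"
  by (simp_all add: prim_def twin_def bypass_def)

lemma vertex_distinct [simp]:
  "prim a \<noteq> twin b" "prim a \<noteq> bypass b" "twin a \<noteq> bypass b"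
  "twin b \<noteq> prim a" "bypass b \<noteq> prim a" "bypass b \<noteq> twin a"
  by (metis vertex_div_mod(4-6) numeral_eq_one_iff semiring_norm(85) zero_neq_numeral zero_neq_one)+

definition tight_V :: "nat \<Rightarrow> nat set" where "tight_V k = {n. level n \<le> k}"

definition tight_E :: "nat \<Rightarrow> nat set set" where
  "tight_E k = {{x, y} | x y. x \<noteq> y \<and> level x \<le> k \<and> level y \<le> k
     \<and> level x \<le> level y + 1 \<and> level y \<le> level x + 1}"

definition tight_P :: "nat \<Rightarrow> nat list" where "tight_P k = map prim [0..<Suc k]"

definition tight_F :: "nat \<Rightarrow> (nat \<times> nat) set" where
  "tight_F k = (\<lambda>i. (prim i, prim (Suc i))) ` {..<k}
     \<union> (\<lambda>i. (prim i, bypass (i div 2))) ` {..<k}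
     \<union> (\<lambda>j. (bypass j, prim (min (2 * j + 2) k))) ` {..<(k + 1) div 2}"

lemma tight_E_iff:
  "{x, y} \<in> tight_E k \<longleftrightarrow> x \<noteq> y \<and> level x \<le> k \<and> level y \<le> k
     \<and> level x \<le> level y + 1 \<and> level y \<le> level x + 1"
  unfolding tight_E_def by (auto simp: doubleton_eq_iff)

lemma tight_E_subset: "e \<in> tight_E k \<Longrightarrow> e \<subseteq> tight_V k \<and> card e = 2"
  unfolding tight_E_def tight_V_def by auto

lemma finite_tight_V: "finite (tight_V k)"
proof (rule finite_subset)
  show "tight_V k \<subseteq> {..<3 * k + 3}"
    by (auto simp: tight_V_def level_def split: if_splits)
qed simp

lemma tight_simple_graph: "simple_graph (tight_V k) (tight_E k)"
  unfolding simple_graph_def using finite_tight_V tight_E_subset by blast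

lemma tight_connected_minus:
  "graph_connected (tight_V k - {x}) {e \<in> tight_E k. x \<notin> e}"
proof -
  let ?W = "tight_V k - {x}" and ?E = "{e \<in> tight_E k. x \<notin> e}"
  let ?R = "{(a, b). {a, b} \<in> ?E}"
  define keep where "keep l = (if x = prim l then twin l else prim l)" for l
  have keep: "l \<le> k \<Longrightarrow> keep l \<in> ?W" "level (keep l) = l" for l
    by (simp_all add: keep_def tight_V_def)
  have edge: "(a, b) \<in> ?R" if "a \<in> ?W" "b \<in> ?W" "a \<noteq> b" "level a \<le> level b + 1"
    "level b \<le> level a + 1" for a b
    using that by (simp add: tight_E_iff tight_V_def)
  have reach: "(keep 0, y) \<in> ?R\<^sup>*" if "y \<in> ?W" "level y = l" for y l
    using that
  proof (induction l arbitrary: y)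
    case 0
    then show ?case
      using edge[of "keep 0" y] keep[of 0] by (cases "y = keep 0") auto
  next
    case (Suc l)
    have "keep l \<in> ?W" using Suc.prems keep(1)[of l] by (simp add: tight_V_def)
    moreover have "keep l \<noteq> y" using Suc.prems keep(2)[of l] by auto
    ultimately have "(keep 0, keep l) \<in> ?R\<^sup>*" "(keep l, y) \<in> ?R"
      using Suc edge[of "keep l" y] keep(2)[of l] by auto
    then show ?case by (rule rtrancl_into_rtrancl)
  qed
  have "\<forall>e\<in>?E. e \<subseteq> ?W" using tight_E_subset by blast
  then show ?thesis
    using graph_connected_if_reachable[of ?E ?W "keep 0"] keep(1)[of 0] reach by blast
qed

lemma tight_two_connected:
  assumes "1 \<le> k"
  shows "two_connected (tight_V k) (tight_E k)"
proof -
  have "{prim 0, twin 0, prim 1} \<subseteq> tight_V k" using assms by (simp add: tight_V_def)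
  then have "card {prim 0, twin 0, prim 1} \<le> card (tight_V k)"
    by (rule card_mono[OF finite_tight_V])
  then have "3 \<le> card (tight_V k)" by simp
  moreover have "prim (Suc k) \<notin> tight_V k" by (simp add: tight_V_def)
  then have "tight_V k - {prim (Suc k)} = tight_V k"
    "{e \<in> tight_E k. prim (Suc k) \<notin> e} = tight_E k"
    using tight_E_subset by blast+
  ultimately show ?thesis
    unfolding two_connected_def using tight_connected_minus[of k "prim (Suc k)"] tight_connected_minus
    by simp
qed

lemma tight_P_nth: "i \<le> k \<Longrightarrow> tight_P k ! i = prim i"
  by (simp add: tight_P_def nth_map_upt del: upt_Suc)

lemma tight_P: "length (tight_P k) = Suc k" "hd (tight_P k) = prim 0" "last (tight_P k) = prim k"
  "distinct (tight_P k)"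
  by (simp_all add: tight_P_def hd_map last_map distinct_map inj_on_def del: upt_Suc)

lemma tight_shortest_path: "shortest_path (tight_E k) (prim 0) (prim k) (tight_P k)"
  unfolding shortest_path_def
proof (intro conjI allI impI)
  have "tight_P k \<noteq> []" using tight_P(1)[of k] by auto
  then show "upath (tight_E k) (tight_P k)"
    using tight_P by (auto simp: upath_def tight_P_nth tight_E_iff)
  show "hd (tight_P k) = prim 0" "last (tight_P k) = prim k" by (simp_all add: tight_P)
  fix Q assume Q: "upath (tight_E k) Q \<and> hd Q = prim 0 \<and> last Q = prim k"
  then have "level (last Q) \<le> level (hd Q) + (length Q - 1)"
    by (intro upath_last_le[of "tight_E k"]) (auto simp: tight_E_iff)
  moreover have "Q \<noteq> []" using Q by (simp add: upath_def)
  ultimately show "length (tight_P k) \<le> length Q"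
    using Q by (cases Q) (simp_all add: tight_P)
qed

lemma tight_F_cases:
  assumes "(a, b) \<in> tight_F k"
  obtains (primary) i where "i < k" "a = prim i" "b = prim (Suc i)"
    | (enter) i where "i < k" "a = prim i" "b = bypass (i div 2)"
    | (leave) j where "2 * j + 1 \<le> k" "a = bypass j" "b = prim (min (2 * j + 2) k)"
  using assms unfolding tight_F_def by fastforce

lemma tight_F_edge: "(a, b) \<in> tight_F k \<Longrightarrow> {a, b} \<in> tight_E k"
  by (erule tight_F_cases) (auto simp: tight_E_iff)

text \<open>A potential increasing along every arc: \<open>bypass j\<close> sits just below the vertex it exits to.\<close>

definition potential :: "nat \<Rightarrow> nat \<Rightarrow> int" where
  "potential k n =
     (if n mod 3 = 2 then 2 * int (min (2 * (n div 3) + 2) k) - 1 else 2 * int (n div 3))"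

lemma potential_simps [simp]:
  "potential k (prim a) = 2 * int a" "potential k (bypass j) = 2 * int (min (2 * j + 2) k) - 1"
  by (simp_all add: potential_def)

lemma tight_F_acyclic: "acyclic (tight_F k)"
proof -
  have "potential k a < potential k b" if "(a, b) \<in> tight_F k" for a b
    using that
  proof (cases rule: tight_F_cases)
    case (enter i)
    have "i + 1 \<le> 2 * (i div 2) + 2" by presburger
    then have "int i + 1 \<le> int (min (2 * (i div 2) + 2) k)" using enter(1) by linarith
    then show ?thesis using enter(2,3) by simp
  qed auto
  then have "acyclic ((tight_F k)\<inverse>)"
    by (intro acyclicI_order[where f = "potential k"]) auto
  then show ?thesis by simp
qed

lemma prim_run_dpath: "a \<le> k \<Longrightarrow> dpath (tight_F k) (map prim [a..<Suc k])"
  by (auto simp: dpath_def distinct_map inj_on_def tight_F_def simp del: upt_Suc)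

lemma tight_avoids_single_link_failures:
  "avoids_single_link_failures (tight_F k) (prim k) (tight_P k)"
  unfolding avoids_single_link_failures_def
proof (intro allI impI)
  fix i assume "i < length (tight_P k) - 1"
  then have i: "i < k" by (simp add: tight_P)
  define j where "j = i div 2"
  define t where "t = min (2 * j + 2) k"
  define Q where "Q = prim i # bypass j # map prim [t..<Suc k]"
  have jt: "2 * j + 1 \<le> k" "i < t" "t \<le> k" using i unfolding t_def j_def by linarith+
  have "(prim i, bypass j) \<in> tight_F k" "(bypass j, prim t) \<in> tight_F k"
    using i jt(1) unfolding tight_F_def j_def t_def by auto
  then have "dpath (tight_F k) Q"
    using prim_run_dpath[OF jt(3)] jt(2,3)
    by (auto simp: Q_def dpath_iff_successively successively_Cons hd_map simp del: upt_Suc)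
  moreover have "\<not> uses_arc Q (prim i, prim (Suc i))"
    using \<open>dpath (tight_F k) Q\<close> unfolding Q_def by (intro not_uses_arc_Cons) (auto simp: dpath_def)
  ultimately show "\<exists>Q. dpath (tight_F k) Q \<and> hd Q = tight_P k ! i \<and> last Q = prim k
      \<and> \<not> uses_arc Q (tight_P k ! i, tight_P k ! (i + 1))"
    using i jt by (intro exI[of _ Q]) (simp add: Q_def tight_P_nth last_map del: upt_Suc)
qed

lemma card_tight_F: "card (tight_F k) = 2 * k + (k + 1) div 2"
proof -
  have "card ((\<lambda>i. (prim i, prim (Suc i))) ` {..<k}) = k"
    "card ((\<lambda>i. (prim i, bypass (i div 2))) ` {..<k}) = k"
    "card ((\<lambda>j. (bypass j, prim (min (2 * j + 2) k))) ` {..<(k + 1) div 2}) = (k + 1) div 2"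
    by (simp_all add: card_image inj_on_def)
  then show ?thesis
    unfolding tight_F_def by (subst card_Un_disjoint; auto)+
qed

lemma tight_FS_setting:
  assumes "1 \<le> k"
  shows "FS_setting (tight_V k) (tight_E k) (prim 0) (prim k) (tight_P k) (tight_F k)"
proof -
  have "dpath (tight_F k) (tight_P k)"
    using prim_run_dpath[of 0 k] unfolding tight_P_def by simp
  moreover have "tight_P k \<noteq> []" using tight_P(1)[of k] by auto
  ultimately have "forwarding_subgraph (tight_E k) (prim 0) (prim k) (tight_P k) (tight_F k)"
    unfolding forwarding_subgraph_def using tight_F_edge tight_F_acyclic tight_P(2,3) by blast
  moreover have "prim 0 \<in> tight_V k" "prim k \<in> tight_V k" "prim 0 \<noteq> prim k"
    using assms by (simp_all add: tight_V_def)
  ultimately show ?thesis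
    unfolding FS_setting_def
    using tight_simple_graph tight_two_connected[OF assms] tight_shortest_path
      tight_avoids_single_link_failures by simp
qed

theorem theorem2:
  shows "(\<forall>(V :: 'a set) E s d P F. FS_setting V E s d P F \<longrightarrow>
            real (card F) \<ge> real_of_int \<lceil>5 * real (length P - 1) / 2\<rceil>)
       \<and> (\<forall>k :: nat. k \<ge> 1 \<longrightarrow>
            (\<exists>(V :: nat set) E s d P F. FS_setting V E s d P F \<and> length P - 1 = k \<and>
               real (card F) = real_of_int \<lceil>5 * real (length P - 1) / 2\<rceil>))"
proof (intro conjI allI impI)
  fix V :: "'a set" and E s d P F
  assume "FS_setting V E s d P F"
  then interpret forwarding_instance V E s d P F by unfold_locales
  show "real (card F) \<ge> real_of_int \<lceil>5 * real (length P - 1) / 2\<rceil>"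
    using card_F_lower_bound ceiling_five_halves[of k] by (simp add: k_def)
next
  fix k :: nat
  assume "k \<ge> 1"
  then show "\<exists>(V :: nat set) E s d P F. FS_setting V E s d P F \<and> length P - 1 = k \<and>
      real (card F) = real_of_int \<lceil>5 * real (length P - 1) / 2\<rceil>"
    using tight_FS_setting card_tight_F ceiling_five_halves[of k] tight_P(1)[of k] by fastforce
qed

end
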